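(* A quantum channel $\mathcal P$ on $S$ satisfies $\mathcal P(\mathsf{St}(S))=\mathsf P(S)$ if and only if there exists an orthonormal basis $\{|\psi_j\rangle\}_{j=1}^d$ of $\mathbb C^d$ such that $\mathcal P(\rho)=\sum_{j=1}^d\langle\psi_j|\rho|\psi_j\rangle\,\tau_j$ for all $\rho$.
   Context: $S$ is a $d$-dimensional quantum system with non-degenerate Hamiltonian $H=\sum_i E_i|i\rangle\langle i|$, $E_1<\dots<E_d$. $\mathsf{St}(S)$ is the set of density matrices; $\mathsf P(S)$ is the set of passive states, i.e. states $\sum_i p_i|i\rangle\langle i|$ with $p_1\ge\dots\ge p_d$. For $j=1,\dots,d$, $\tau_j=\frac1j\sum_{i=1}^j|i\rangle\langle i|$. *)

theory Defs
  imports "Jordan_Normal_Form.Matrix"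
begin

text \<open>The energy eigenbasis |1>,...,|d> of H (E_1 < ... < E_d) is identified with the
standard basis e_0,...,e_{d-1} of C^d (0-based indexing); operators on S are d x d
complex matrices.\<close>

definition qform :: "nat \<Rightarrow> complex mat \<Rightarrow> complex vec \<Rightarrow> complex" where
  "qform n A v = (\<Sum>i<n. \<Sum>j<n. cnj (v $ i) * A $$ (i, j) * v $ j)"

definition psd :: "nat \<Rightarrow> complex mat \<Rightarrow> bool" where
  "psd n A \<longleftrightarrow> A \<in> carrier_mat n n \<and>
     (\<forall>v \<in> carrier_vec n. Im (qform n A v) = 0 \<and> Re (qform n A v) \<ge> 0)"

definition mtrace :: "complex mat \<Rightarrow> complex" where
  "mtrace A = (\<Sum>i<dim_row A. A $$ (i, i))"

definition density_states :: "nat \<Rightarrow> complex mat set" where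
  "density_states d = {\<rho>. psd d \<rho> \<and> mtrace \<rho> = 1}"

definition passive_states :: "nat \<Rightarrow> complex mat set" where
  "passive_states d = {\<rho>. \<exists>p :: nat \<Rightarrow> real.
      (\<forall>i<d. 0 \<le> p i) \<and> (\<Sum>i<d. p i) = 1 \<and>
      (\<forall>i j. i \<le> j \<longrightarrow> j < d \<longrightarrow> p j \<le> p i) \<and>
      \<rho> = mat d d (\<lambda>(i, k). if i = k then complex_of_real (p i) else 0)}"

text \<open>tau j (0-based, j < d) is the paper's tau_{j+1} = (1/(j+1)) sum_{i \<le> j} |i><i|.\<close>
definition tau :: "nat \<Rightarrow> nat \<Rightarrow> complex mat" where
  "tau d j = mat d d (\<lambda>(i, k). if i = k \<and> i \<le> j then 1 / of_nat (j + 1) else 0)"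

text \<open>The (a,b) d x d block of an (n d) x (n d) matrix (index a*d+k for C^n \<otimes> C^d).\<close>
definition block :: "nat \<Rightarrow> complex mat \<Rightarrow> nat \<Rightarrow> nat \<Rightarrow> complex mat" where
  "block d X a b = mat d d (\<lambda>(k, l). X $$ (a * d + k, b * d + l))"

definition ampl :: "nat \<Rightarrow> nat \<Rightarrow> (complex mat \<Rightarrow> complex mat) \<Rightarrow> complex mat \<Rightarrow> complex mat" where
  "ampl n d P X = mat (n * d) (n * d)
     (\<lambda>(i, j). P (block d X (i div d) (j div d)) $$ (i mod d, j mod d))"

definition quantum_channel :: "nat \<Rightarrow> (complex mat \<Rightarrow> complex mat) \<Rightarrow> bool" where
  "quantum_channel d P \<longleftrightarrow>
     (\<forall>A \<in> carrier_mat d d. P A \<in> carrier_mat d d) \<and>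
     (\<forall>A \<in> carrier_mat d d. \<forall>B \<in> carrier_mat d d. \<forall>a b :: complex.
         P (a \<cdot>\<^sub>m A + b \<cdot>\<^sub>m B) = a \<cdot>\<^sub>m P A + b \<cdot>\<^sub>m P B) \<and>
     (\<forall>A \<in> carrier_mat d d. mtrace (P A) = mtrace A) \<and>
     (\<forall>n X. psd (n * d) X \<longrightarrow> psd (n * d) (ampl n d P X))"

end

theory Submission
  imports Defs "Jordan_Normal_Form.Determinant"
begin

text \<open>
  Passive states are exactly the mixtures \<Sum>_j q_j \<tau>_j of the \<tau>_j with q a probability vector,
  and the q_j are read off from the diagonal. If P(\<rho>) = \<Sum>_j \<langle>\<psi>_j|\<rho>|\<psi>_j\<rangle> \<tau>_j for an orthonormal
  basis \<psi>, every q is attained, by \<rho> = \<Sum>_j q_j |\<psi>_j\<rangle>\<langle>\<psi>_j|.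

  Conversely, if P maps the states onto the passive states, the coefficient maps w_j with
  P(X) = \<Sum>_j w_j(X) \<tau>_j are linear, nonnegative on states and sum to the trace, so
  w_j(X) = tr(G_j X) for a POVM {G_j}. Since \<tau>_k is attained, some state, and by splitting off
  a column some pure state v_k, satisfies \<langle>v_k|G_l|v_k\<rangle> = \<delta>_kl. For a POVM this forces
  G_l v_k = \<delta>_kl v_k, hence the v_k are orthonormal and G_l = |v_l\<rangle>\<langle>v_l|.
\<close>

section \<open>Sesquilinear forms\<close>

definition sesq :: "nat \<Rightarrow> (nat \<Rightarrow> nat \<Rightarrow> complex) \<Rightarrow> (nat \<Rightarrow> complex) \<Rightarrow> (nat \<Rightarrow> complex) \<Rightarrow> complex"
  where "sesq n K x y = (\<Sum>i<n. \<Sum>j<n. cnj (x i) * K i j * y j)"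

abbreviation quad :: "nat \<Rightarrow> (nat \<Rightarrow> nat \<Rightarrow> complex) \<Rightarrow> (nat \<Rightarrow> complex) \<Rightarrow> complex"
  where "quad n K x \<equiv> sesq n K x x"

definition ket :: "nat \<Rightarrow> nat \<Rightarrow> complex"
  where "ket a i = (if i = a then 1 else 0)"

definition psd_form :: "nat \<Rightarrow> (nat \<Rightarrow> nat \<Rightarrow> complex) \<Rightarrow> bool"
  where "psd_form n K \<longleftrightarrow> (\<forall>x. 0 \<le> quad n K x)"

lemma sesq_eq_sum_apply: "sesq n K x y = (\<Sum>i<n. cnj (x i) * (\<Sum>j<n. K i j * y j))"
  unfolding sesq_def by (simp add: sum_distrib_left mult.assoc)

lemma quad_add_scaled:
  "quad n K (\<lambda>i. x i + t * y i)
     = quad n K x + t * sesq n K x y + cnj t * sesq n K y x + t * cnj t * quad n K y"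
  unfolding sesq_def by (simp add: algebra_simps sum.distrib sum_distrib_left)

lemma sesq_diff_scaled:
  "sesq n (\<lambda>i j. K i j - c * L i j) x y = sesq n K x y - c * sesq n L x y"
  unfolding sesq_def by (simp add: algebra_simps sum_subtractf sum_distrib_left)

lemma sum_ket_mult [simp]: "a < n \<Longrightarrow> (\<Sum>i<n. ket a i * f i) = f a"
  unfolding ket_def by (simp add: if_distrib[of "\<lambda>z. z * _"] cong: if_cong)

lemma sum_mult_ket [simp]: "a < n \<Longrightarrow> (\<Sum>i<n. f i * ket a i) = f a"
  unfolding ket_def by (simp add: if_distrib[of "\<lambda>z. _ * z"] cong: if_cong)

lemma cnj_ket [simp]: "cnj (ket a i) = ket a i"
  unfolding ket_def by simp

lemma ket_same [simp]: "ket a a = 1"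
  unfolding ket_def by simp

lemma sesq_ket_left: "a < n \<Longrightarrow> sesq n K (ket a) y = (\<Sum>j<n. K a j * y j)"
  unfolding sesq_eq_sum_apply by simp

lemma sesq_ket_right: "a < n \<Longrightarrow> sesq n K x (ket a) = (\<Sum>i<n. cnj (x i) * K i a)"
  unfolding sesq_eq_sum_apply by simp

lemma quad_ket [simp]: "a < n \<Longrightarrow> quad n K (ket a) = K a a"
  by (simp add: sesq_ket_left)

lemma quad_ket_plus_ket:
  assumes "a < n" "b < n" "a \<noteq> b"
  shows "quad n K (\<lambda>i. ket a i + c * ket b i)
           = K a a + c * K a b + cnj c * K b a + c * cnj c * K b b"
  using assms by (simp add: quad_add_scaled sesq_ket_right)

lemma entry_eq_0_if_quad_eq_0:
  assumes quad0: "\<And>x. quad n K x = 0" and a: "a < n" and b: "b < n"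
  shows "K a b = 0"
proof (cases "a = b")
  case True
  then show ?thesis using quad0[of "ket a"] a by simp
next
  case False
  have aa: "K a a = 0" and bb: "K b b = 0" using quad0[of "ket a"] quad0[of "ket b"] a b by simp_all
  have "K a b + K b a = 0"
    using quad0[of "\<lambda>i. ket a i + 1 * ket b i"] quad_ket_plus_ket[OF a b False, of K 1] aa bb by simp
  moreover have "\<i> * K a b - \<i> * K b a = 0"
    using quad0[of "\<lambda>i. ket a i + \<i> * ket b i"] quad_ket_plus_ket[OF a b False, of K \<i>] aa bb by simp
  ultimately show ?thesis by (simp add: right_diff_distrib[symmetric])
qed

lemma psd_form_hermitian:
  assumes K: "psd_form n K" and a: "a < n" and b: "b < n"
  shows "K b a = cnj (K a b)"
proof -
  have Im0: "Im (quad n K x) = 0" for x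
    using K by (simp add: psd_form_def less_eq_complex_def)
  show ?thesis
  proof (cases "a = b")
    case True
    then show ?thesis using Im0[of "ket a"] a by (simp add: complex_eq_iff)
  next
    case False
    have aa: "Im (K a a) = 0" and bb: "Im (K b b) = 0" using Im0[of "ket a"] Im0[of "ket b"] a b by simp_all
    have "Im (K a b + K b a) = 0"
      using Im0[of "\<lambda>i. ket a i + 1 * ket b i"] quad_ket_plus_ket[OF a b False, of K 1] aa bb by simp
    moreover have "Im (\<i> * K a b - \<i> * K b a) = 0"
      using Im0[of "\<lambda>i. ket a i + \<i> * ket b i"] quad_ket_plus_ket[OF a b False, of K \<i>] aa bb
      by (simp add: algebra_simps)
    ultimately show ?thesis by (simp add: complex_eq_iff algebra_simps)
  qed
qed

lemma psd_form_sesq_swap: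
  assumes K: "psd_form n K"
  shows "sesq n K x y = cnj (sesq n K y x)"
proof -
  have "sesq n K x y = (\<Sum>j<n. \<Sum>i<n. cnj (x i) * K i j * y j)"
    unfolding sesq_def by (rule sum.swap)
  also have "\<dots> = (\<Sum>j<n. \<Sum>i<n. cnj (cnj (y j) * K j i * x i))"
  proof (intro sum.cong refl)
    fix i j assume "j \<in> {..<n}" "i \<in> {..<n}"
    then show "cnj (x i) * K i j * y j = cnj (cnj (y j) * K j i * x i)"
      by (simp add: psd_form_hermitian[OF K, of j i])
  qed
  finally show ?thesis by (simp add: sesq_def)
qed

lemma le_mult_if_quadratic_nonneg:
  fixes A S C :: real
  assumes "0 \<le> S" "0 \<le> A" "0 \<le> C" and nonneg: "\<And>r. 0 \<le> A - 2 * r * S + r\<^sup>2 * S * C"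
  shows "S \<le> A * C"
proof (cases "S = 0")
  case True
  then show ?thesis using assms by simp
next
  case False
  then have "S > 0" using assms by simp
  show ?thesis
  proof (cases "C = 0")
    case True
    have "0 \<le> A - 2 * ((A + 1) / (2 * S)) * S" using nonneg[of "(A + 1) / (2 * S)"] True by simp
    also have "\<dots> = -1" using \<open>S > 0\<close> by (simp add: field_simps)
    finally show ?thesis by simp
  next
    case False
    then have "C > 0" using assms by simp
    have "0 \<le> A - 2 * (1 / C) * S + (1 / C)\<^sup>2 * S * C" by (rule nonneg)
    also have "\<dots> = A - S / C" using \<open>C > 0\<close> by (simp add: field_simps power2_eq_square)
    finally show ?thesis using \<open>C > 0\<close> by (simp add: field_simps)
  qed
qed

lemma psd_form_cauchy_schwarz:
  assumes K: "psd_form n K" and a: "a < n"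
  shows "(cmod (sesq n K x (ket a)))\<^sup>2 \<le> Re (quad n K x) * Re (K a a)"
proof -
  define s where "s = sesq n K x (ket a)"
  define S where "S = (Re s)\<^sup>2 + (Im s)\<^sup>2"
  have swap: "sesq n K (ket a) x = cnj s"
    unfolding s_def by (rule psd_form_sesq_swap[OF K])
  have Re_nonneg: "0 \<le> Re (quad n K y)" for y
    using K by (simp add: psd_form_def less_eq_complex_def)
  have quadratic: "0 \<le> Re (quad n K x) - 2 * r * S + r\<^sup>2 * S * Re (K a a)" for r
  proof -
    have "0 \<le> Re (quad n K (\<lambda>i. x i + (- (of_real r * cnj s)) * ket a i))" by (rule Re_nonneg)
    also have "\<dots> = Re (quad n K x) - 2 * r * S + r\<^sup>2 * S * Re (K a a)"
      unfolding quad_add_scaled swap s_def[symmetric] S_def quad_ket[OF a]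
      by (simp add: algebra_simps power2_eq_square)
    finally show ?thesis .
  qed
  have S: "0 \<le> S" unfolding S_def by simp
  have Kaa: "0 \<le> Re (K a a)" using Re_nonneg[of "ket a"] a by simp
  have "S \<le> Re (quad n K x) * Re (K a a)"
    by (rule le_mult_if_quadratic_nonneg[OF S Re_nonneg Kaa quadratic])
  then show ?thesis unfolding S_def s_def by (simp add: cmod_power2)
qed

lemma psd_form_kernel:
  assumes K: "psd_form n K" and "quad n K x = 0" and a: "a < n"
  shows "(\<Sum>j<n. K a j * x j) = 0"
proof -
  have "(cmod (sesq n K x (ket a)))\<^sup>2 \<le> 0"
    using psd_form_cauchy_schwarz[OF K a, of x] \<open>quad n K x = 0\<close> by simp
  then have "sesq n K (ket a) x = 0" using psd_form_sesq_swap[OF K, of "ket a" x] by simp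
  then show ?thesis using a by (simp add: sesq_ket_left)
qed

lemma psd_form_entry_bound:
  assumes K: "psd_form n K" and "a < n" "b < n"
  shows "(cmod (K b a))\<^sup>2 \<le> Re (K b b) * Re (K a a)"
  using psd_form_cauchy_schwarz[OF K \<open>a < n\<close>, of "ket b"] assms by (simp add: sesq_ket_right)

section \<open>Linear functionals on matrices\<close>

definition elem_mat :: "nat \<Rightarrow> nat \<Rightarrow> nat \<Rightarrow> complex mat"
  where "elem_mat d a b = mat d d (\<lambda>(i, j). if i = a \<and> j = b then 1 else 0)"

definition proj_mat :: "nat \<Rightarrow> (nat \<Rightarrow> complex) \<Rightarrow> complex mat"
  where "proj_mat d x = mat d d (\<lambda>(i, j). x i * cnj (x j))"

definition linear_functional :: "nat \<Rightarrow> (complex mat \<Rightarrow> complex) \<Rightarrow> bool"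
  where "linear_functional d f \<longleftrightarrow> (\<forall>A \<in> carrier_mat d d. \<forall>B \<in> carrier_mat d d. \<forall>a b.
      f (a \<cdot>\<^sub>m A + b \<cdot>\<^sub>m B) = a * f A + b * f B)"

lemma elem_mat_carrier [simp]: "elem_mat d a b \<in> carrier_mat d d"
  unfolding elem_mat_def by simp

lemma dim_proj_mat [simp]: "dim_row (proj_mat d x) = d" "dim_col (proj_mat d x) = d"
  unfolding proj_mat_def by simp_all

lemma proj_mat_carrier [simp]: "proj_mat d x \<in> carrier_mat d d"
  by (simp add: carrier_matI)

lemma linear_functional_zero:
  assumes "linear_functional d f"
  shows "f (0\<^sub>m d d) = 0"
proof -
  have "(0::complex) \<cdot>\<^sub>m 0\<^sub>m d d + (0::complex) \<cdot>\<^sub>m 0\<^sub>m d d = 0\<^sub>m d d" by (rule eq_matI) auto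
  then show ?thesis using assms unfolding linear_functional_def
    by (metis mult_zero_left add_0 zero_carrier_mat)
qed

lemma linear_functional_smult:
  assumes "linear_functional d f" "A \<in> carrier_mat d d"
  shows "f (c \<cdot>\<^sub>m A) = c * f A"
proof -
  have "c \<cdot>\<^sub>m A + 0 \<cdot>\<^sub>m A = c \<cdot>\<^sub>m A" using assms(2) by (intro eq_matI) auto
  then show ?thesis using assms unfolding linear_functional_def by (metis add_0_right mult_zero_left)
qed

lemma linear_functional_add:
  assumes "linear_functional d f" "A \<in> carrier_mat d d" "B \<in> carrier_mat d d"
  shows "f (A + B) = f A + f B"
proof -
  have "1 \<cdot>\<^sub>m A + 1 \<cdot>\<^sub>m B = A + B" using assms(2,3) by (intro eq_matI) auto
  then show ?thesis using assms unfolding linear_functional_def by (metis mult_1)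
qed

lemma linear_functional_diff:
  "linear_functional d f \<Longrightarrow> linear_functional d g \<Longrightarrow> linear_functional d (\<lambda>X. f X - g X)"
  unfolding linear_functional_def by (simp add: algebra_simps)

lemma linear_functional_scale:
  "linear_functional d f \<Longrightarrow> linear_functional d (\<lambda>X. c * f X)"
  unfolding linear_functional_def by (simp add: algebra_simps)

lemma linear_functional_scale_right:
  "linear_functional d f \<Longrightarrow> linear_functional d (\<lambda>X. f X * c)"
  unfolding linear_functional_def by (simp add: algebra_simps)

lemma linear_functional_sum:
  "(\<And>j. j \<in> J \<Longrightarrow> linear_functional d (f j)) \<Longrightarrow> linear_functional d (\<lambda>X. \<Sum>j\<in>J. f j X)"
  unfolding linear_functional_def by (simp add: sum.distrib sum_distrib_left)

lemma linear_functional_mtrace: "linear_functional d mtrace"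
  unfolding linear_functional_def mtrace_def
  by (auto simp: sum.distrib sum_distrib_left carrier_matD)

lemma linear_functional_expand_masked:
  assumes f: "linear_functional d f" and X: "X \<in> carrier_mat d d"
    and "finite S" "S \<subseteq> {..<d} \<times> {..<d}"
  shows "f (mat d d (\<lambda>p. if p \<in> S then X $$ p else 0)) = (\<Sum>p\<in>S. X $$ p * f (elem_mat d (fst p) (snd p)))"
  using assms(3,4)
proof (induction S rule: finite_induct)
  case empty
  have "mat d d (\<lambda>p. if p \<in> {} then X $$ p else 0) = 0\<^sub>m d d" by (rule eq_matI) auto
  then show ?case by (simp add: linear_functional_zero[OF f])
next
  case (insert p S)
  have "mat d d (\<lambda>q. if q \<in> insert p S then X $$ q else 0)
     = mat d d (\<lambda>q. if q \<in> S then X $$ q else 0) + X $$ p \<cdot>\<^sub>m elem_mat d (fst p) (snd p)"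
    using insert(2) by (intro eq_matI) (auto simp: elem_mat_def)
  then show ?case
    using insert by (simp add: linear_functional_add[OF f] linear_functional_smult[OF f])
qed

lemma linear_functional_expand:
  assumes f: "linear_functional d f" and X: "X \<in> carrier_mat d d"
  shows "f X = (\<Sum>a<d. \<Sum>b<d. X $$ (a, b) * f (elem_mat d a b))"
proof -
  have "mat d d (\<lambda>p. if p \<in> {..<d} \<times> {..<d} then X $$ p else 0) = X"
    using X by (intro eq_matI) auto
  then have "f X = (\<Sum>p\<in>{..<d} \<times> {..<d}. X $$ p * f (elem_mat d (fst p) (snd p)))"
    using linear_functional_expand_masked[OF f X, of "{..<d} \<times> {..<d}"] by simp
  then show ?thesis by (simp add: sum.cartesian_product case_prod_beta)
qed

lemma linear_functional_proj_mat:
  assumes f: "linear_functional d f"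
  shows "f (proj_mat d x) = quad d (\<lambda>i k. f (elem_mat d k i)) x"
proof -
  have "f (proj_mat d x) = (\<Sum>a<d. \<Sum>b<d. x a * cnj (x b) * f (elem_mat d a b))"
    using linear_functional_expand[OF f proj_mat_carrier] by (simp add: proj_mat_def)
  also have "\<dots> = (\<Sum>b<d. \<Sum>a<d. x a * cnj (x b) * f (elem_mat d a b))" by (rule sum.swap)
  also have "\<dots> = quad d (\<lambda>i k. f (elem_mat d k i)) x"
    unfolding sesq_def by (simp add: algebra_simps)
  finally show ?thesis .
qed

text \<open>Rank-one projections span all matrices, by polarization.\<close>

lemma linear_functional_eq_0_if_proj_mat:
  assumes f: "linear_functional d f" and proj0: "\<And>x. f (proj_mat d x) = 0"
    and X: "X \<in> carrier_mat d d"
  shows "f X = 0"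
proof -
  have "f (elem_mat d a b) = 0" if "a < d" "b < d" for a b
    using entry_eq_0_if_quad_eq_0[of d "\<lambda>i k. f (elem_mat d k i)" b a] that proj0
    by (simp add: linear_functional_proj_mat[OF f])
  then show ?thesis by (simp add: linear_functional_expand[OF f X])
qed

section \<open>Positive matrices and density states\<close>

lemma psd_iff_qform_nonneg:
  "psd n A \<longleftrightarrow> A \<in> carrier_mat n n \<and> (\<forall>v \<in> carrier_vec n. 0 \<le> qform n A v)"
  unfolding psd_def less_eq_complex_def by auto

lemma qform_eq_quad: "qform n A v = quad n (\<lambda>i j. A $$ (i, j)) (\<lambda>i. v $ i)"
  unfolding qform_def sesq_def by simp

lemma psd_iff_psd_form: "psd n A \<longleftrightarrow> A \<in> carrier_mat n n \<and> psd_form n (\<lambda>i j. A $$ (i, j))"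
proof -
  have "quad n (\<lambda>i j. A $$ (i, j)) x = qform n A (vec n x)" for x
    unfolding qform_eq_quad sesq_def by (intro sum.cong refl) simp
  then show ?thesis
    unfolding psd_iff_qform_nonneg psd_form_def qform_eq_quad by (metis vec_carrier)
qed

lemma mult_cnj_nonneg: "0 \<le> z * cnj z"
  by (simp add: complex_mult_cnj less_eq_complex_def)

lemma quad_proj_mat:
  "quad n (\<lambda>i j. proj_mat n x $$ (i, j)) v = (\<Sum>i<n. cnj (v i) * x i) * cnj (\<Sum>i<n. cnj (v i) * x i)"
proof -
  have "quad n (\<lambda>i j. proj_mat n x $$ (i, j)) v = (\<Sum>i<n. \<Sum>j<n. (cnj (v i) * x i) * (cnj (x j) * v j))"
    unfolding sesq_def proj_mat_def by (intro sum.cong refl) (simp add: algebra_simps)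
  also have "\<dots> = (\<Sum>i<n. cnj (v i) * x i) * (\<Sum>j<n. cnj (x j) * v j)"
    by (simp add: sum_product)
  finally show ?thesis by (simp add: mult.commute)
qed

lemma psd_proj_mat: "psd n (proj_mat n x)"
  unfolding psd_iff_psd_form psd_form_def quad_proj_mat by (blast intro: mult_cnj_nonneg proj_mat_carrier)

lemma mtrace_proj_mat: "mtrace (proj_mat n x) = (\<Sum>i<n. x i * cnj (x i))"
  unfolding mtrace_def proj_mat_def by simp

lemma proj_mat_scale: "proj_mat n (\<lambda>i. c * x i) = (c * cnj c) \<cdot>\<^sub>m proj_mat n x"
  unfolding proj_mat_def by (rule eq_matI) auto

lemma mtrace_smult: "A \<in> carrier_mat n n \<Longrightarrow> mtrace (c \<cdot>\<^sub>m A) = c * mtrace A"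
  unfolding mtrace_def by (simp add: sum_distrib_left)

lemma psd_smult:
  assumes "psd n A" "0 \<le> c"
  shows "psd n (c \<cdot>\<^sub>m A)"
proof -
  have "qform n (c \<cdot>\<^sub>m A) v = c * qform n A v" if "A \<in> carrier_mat n n" for v
    using that unfolding qform_def sum_distrib_left by (intro sum.cong refl) auto
  then show ?thesis using assms by (simp add: psd_iff_qform_nonneg)
qed

lemma psd_diag_nonneg: "psd n A \<Longrightarrow> i < n \<Longrightarrow> 0 \<le> A $$ (i, i)"
  unfolding psd_iff_psd_form psd_form_def by (metis quad_ket)

lemma psd_mtrace_nonneg:
  assumes "psd n A"
  shows "0 \<le> mtrace A"
proof -
  have "A \<in> carrier_mat n n" using assms by (simp add: psd_def)
  then show ?thesis unfolding mtrace_def by (auto intro!: sum_nonneg psd_diag_nonneg[OF assms])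
qed

lemma density_states_carrier: "\<rho> \<in> density_states n \<Longrightarrow> \<rho> \<in> carrier_mat n n"
  by (simp add: density_states_def psd_def)

lemma psd_zero_or_scaled_state:
  assumes A: "psd n A"
  shows "A = 0\<^sub>m n n \<or> (\<exists>t \<ge> 0. \<exists>\<rho> \<in> density_states n. A = t \<cdot>\<^sub>m \<rho>)"
proof (cases "mtrace A = 0")
  case True
  have carrier: "A \<in> carrier_mat n n" using A by (simp add: psd_def)
  then have diag0: "A $$ (i, i) = 0" if "i < n" for i
    using True that psd_diag_nonneg[OF A] sum_nonneg_eq_0_iff[of "{..<n}" "\<lambda>i. A $$ (i, i)"]
    unfolding mtrace_def by auto
  have "A $$ (i, j) = 0" if "i < n" "j < n" for i j
    using psd_form_entry_bound[of n "\<lambda>i j. A $$ (i, j)" j i] A that diag0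
    by (simp add: psd_iff_psd_form)
  then have "A = 0\<^sub>m n n" using carrier by (intro eq_matI) auto
  then show ?thesis ..
next
  case False
  let ?t = "mtrace A"
  define r where "r = Re ?t"
  have carrier: "A \<in> carrier_mat n n" using A by (simp add: psd_def)
  have "0 \<le> ?t" by (rule psd_mtrace_nonneg[OF A])
  then have "?t = of_real r" and "0 < r"
    using False by (auto simp: r_def less_eq_complex_def complex_eq_iff)
  then have "0 \<le> 1 / ?t" by (simp add: less_eq_complex_def)
  then have "1 / ?t \<cdot>\<^sub>m A \<in> density_states n"
    using A False carrier by (simp add: density_states_def psd_smult mtrace_smult)
  moreover have "A = ?t \<cdot>\<^sub>m (1 / ?t \<cdot>\<^sub>m A)"
    using False carrier by (intro eq_matI) auto
  ultimately show ?thesis using \<open>0 \<le> ?t\<close> by blast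
qed

lemma linear_functional_eq_on_states:
  assumes f: "linear_functional n f" and g: "linear_functional n g"
    and eq: "\<And>\<rho>. \<rho> \<in> density_states n \<Longrightarrow> f \<rho> = g \<rho>" and X: "X \<in> carrier_mat n n"
  shows "f X = g X"
proof -
  let ?h = "\<lambda>X. f X - g X"
  have h: "linear_functional n ?h" using f g by (rule linear_functional_diff)
  have "?h A = 0" if "psd n A" for A
    using psd_zero_or_scaled_state[OF that]
  proof
    assume "A = 0\<^sub>m n n"
    then show ?thesis using linear_functional_zero[OF h] by simp
  next
    assume "\<exists>t \<ge> 0. \<exists>\<rho> \<in> density_states n. A = t \<cdot>\<^sub>m \<rho>"
    then obtain t \<rho> where \<rho>: "\<rho> \<in> density_states n" and "A = t \<cdot>\<^sub>m \<rho>" by blast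
    then show ?thesis
      using linear_functional_smult[OF h density_states_carrier[OF \<rho>]] eq[OF \<rho>] by simp
  qed
  then have "?h X = 0" using linear_functional_eq_0_if_proj_mat[OF h _ X] psd_proj_mat by blast
  then show ?thesis by simp
qed

lemma linear_functional_nonneg_on_psd:
  assumes f: "linear_functional n f" and nonneg: "\<And>\<rho>. \<rho> \<in> density_states n \<Longrightarrow> 0 \<le> f \<rho>"
    and A: "psd n A"
  shows "0 \<le> f A"
  using psd_zero_or_scaled_state[OF A]
proof
  assume "A = 0\<^sub>m n n"
  then show ?thesis using linear_functional_zero[OF f] by simp
next
  assume "\<exists>t \<ge> 0. \<exists>\<rho> \<in> density_states n. A = t \<cdot>\<^sub>m \<rho>"
  then obtain t \<rho> where "0 \<le> t" and \<rho>: "\<rho> \<in> density_states n" and "A = t \<cdot>\<^sub>m \<rho>" by blast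
  then show ?thesis
    using linear_functional_smult[OF f density_states_carrier[OF \<rho>]] nonneg[OF \<rho>]
    by (simp add: mult_nonneg_nonneg)
qed

section \<open>Orthonormal families and their mixtures\<close>

definition orthonormal :: "nat \<Rightarrow> (nat \<Rightarrow> nat \<Rightarrow> complex) \<Rightarrow> bool"
  where "orthonormal n v \<longleftrightarrow>
    (\<forall>j<n. \<forall>k<n. (\<Sum>i<n. cnj (v j i) * v k i) = (if j = k then 1 else 0))"

lemma orthonormal_completeness:
  assumes orth: "orthonormal n v" and "i < n" "k < n"
  shows "(\<Sum>m<n. v m i * cnj (v m k)) = (if i = k then 1 else 0)"
proof -
  define U where "U = mat n n (\<lambda>(i, m). v m i)"
  define V where "V = mat n n (\<lambda>(m, i). cnj (v m i))"
  have U: "U \<in> carrier_mat n n" and V: "V \<in> carrier_mat n n" unfolding U_def V_def by auto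
  have "V * U = 1\<^sub>m n"
    using orth by (intro eq_matI) (auto simp: U_def V_def orthonormal_def scalar_prod_def lessThan_atLeast0)
  then have "U * V = 1\<^sub>m n" using mat_mult_left_right_inverse[OF V U] by simp
  moreover have "(U * V) $$ (i, k) = (\<Sum>m<n. v m i * cnj (v m k))"
    using assms U V by (simp add: scalar_prod_def U_def V_def lessThan_atLeast0)
  ultimately show ?thesis using assms by simp
qed

lemma sum_quad_orthonormal:
  assumes orth: "orthonormal n v"
  shows "(\<Sum>j<n. quad n K (v j)) = (\<Sum>i<n. K i i)"
proof -
  have "(\<Sum>j<n. quad n K (v j)) = (\<Sum>i<n. \<Sum>k<n. K i k * (\<Sum>j<n. v j k * cnj (v j i)))"
    unfolding sesq_def sum_distrib_left
    by (subst sum.swap, rule sum.cong[OF refl], subst sum.swap) (simp add: ac_simps)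
  also have "\<dots> = (\<Sum>i<n. \<Sum>k<n. K i k * ket i k)"
    using orthonormal_completeness[OF orth] by (intro sum.cong refl) (simp add: ket_def)
  also have "\<dots> = (\<Sum>i<n. K i i)" by simp
  finally show ?thesis .
qed

definition prob_vec :: "nat \<Rightarrow> (nat \<Rightarrow> real) \<Rightarrow> bool"
  where "prob_vec n q \<longleftrightarrow> (\<forall>j<n. 0 \<le> q j) \<and> (\<Sum>j<n. q j) = 1"

definition mixture :: "nat \<Rightarrow> (nat \<Rightarrow> real) \<Rightarrow> (nat \<Rightarrow> nat \<Rightarrow> complex) \<Rightarrow> complex mat"
  where "mixture n q v = mat n n (\<lambda>(i, k). \<Sum>j<n. of_real (q j) * v j i * cnj (v j k))"

lemma quad_mixture:
  "quad n (\<lambda>i k. mixture n q v $$ (i, k)) x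
     = (\<Sum>j<n. of_real (q j) * ((\<Sum>i<n. cnj (x i) * v j i) * cnj (\<Sum>i<n. cnj (x i) * v j i)))"
proof -
  let ?t = "\<lambda>j i k. of_real (q j) * ((cnj (x i) * v j i) * (x k * cnj (v j k)))"
  have "quad n (\<lambda>i k. mixture n q v $$ (i, k)) x = (\<Sum>i<n. \<Sum>k<n. \<Sum>j<n. ?t j i k)"
    unfolding sesq_def mixture_def by (simp add: sum_distrib_left sum_distrib_right mult_ac)
  also have "\<dots> = (\<Sum>i<n. \<Sum>j<n. \<Sum>k<n. ?t j i k)"
    by (rule sum.cong[OF refl], rule sum.swap)
  also have "\<dots> = (\<Sum>j<n. \<Sum>i<n. \<Sum>k<n. ?t j i k)"
    by (rule sum.swap)
  also have "\<dots> = (\<Sum>j<n. of_real (q j) * ((\<Sum>i<n. cnj (x i) * v j i) * (\<Sum>k<n. x k * cnj (v j k))))"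
    unfolding sum_product by (simp only: sum_distrib_left)
  finally show ?thesis by simp
qed

lemma mixture_density_state:
  assumes q: "prob_vec n q" and orth: "orthonormal n v"
  shows "mixture n q v \<in> density_states n"
proof -
  have "0 \<le> of_real (q j) * (z * cnj z)" if "j < n" for j z
    by (rule mult_nonneg_nonneg) (use q that in \<open>simp_all add: prob_vec_def less_eq_complex_def mult_cnj_nonneg\<close>)
  then have "0 \<le> quad n (\<lambda>i k. mixture n q v $$ (i, k)) x" for x
    unfolding quad_mixture by (blast intro: sum_nonneg)
  then have "psd n (mixture n q v)"
    by (simp add: psd_iff_psd_form psd_form_def mixture_def)
  moreover have "mtrace (mixture n q v) = 1"
  proof -
    have "mtrace (mixture n q v) = (\<Sum>j<n. of_real (q j) * (\<Sum>i<n. cnj (v j i) * v j i))"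
      unfolding mtrace_def mixture_def
      by (simp add: sum_distrib_left ac_simps) (rule sum.swap)
    also have "\<dots> = of_real (\<Sum>j<n. q j)"
      using orth by (simp add: orthonormal_def)
    also have "\<dots> = 1" using q by (simp add: prob_vec_def)
    finally show ?thesis .
  qed
  ultimately show ?thesis by (simp add: density_states_def)
qed

lemma quad_mixture_orthonormal:
  assumes orth: "orthonormal n v" and m: "m < n"
  shows "quad n (\<lambda>i k. mixture n q v $$ (i, k)) (v m) = of_real (q m)"
proof -
  have "(\<Sum>i<n. cnj (v m i) * v j i) = ket m j" if "j < n" for j
    using orth that m by (simp add: orthonormal_def ket_def)
  then have "quad n (\<lambda>i k. mixture n q v $$ (i, k)) (v m) = (\<Sum>j<n. of_real (q j) * ket m j)"
    unfolding quad_mixture by (intro sum.cong refl) (simp add: ket_def)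
  also have "\<dots> = of_real (q m)" using m by simp
  finally show ?thesis .
qed

section \<open>Passive states as mixtures of the \<tau>_j\<close>

lemma one_plus_of_nat_neq_0 [simp]: "1 + of_nat n \<noteq> (0 :: 'a :: semiring_char_0)"
  by (metis of_nat_Suc of_nat_neq_0)

lemma sum_if_le_eq_sum_atLeastLessThan: "(\<Sum>j<(d::nat). if a \<le> j then f j else 0) = (\<Sum>j\<in>{a..<d}. f j)"
proof -
  have "{..<d} \<inter> {j. a \<le> j} = {a..<d}" by auto
  then show ?thesis by (simp add: sum.If_cases)
qed

definition tau_mix :: "nat \<Rightarrow> (nat \<Rightarrow> complex) \<Rightarrow> complex mat"
  where "tau_mix d c = mat d d (\<lambda>(a, b). \<Sum>j<d. c j * tau d j $$ (a, b))"

text \<open>The diagonal of \<open>tau_mix d c\<close> is \<sigma>_aa = \<Sum>_{j \<ge> a} c_j / (j + 1), so the coefficients are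
  recovered as c_j = (j + 1) (\<sigma>_jj - \<sigma>_{j+1,j+1}), reading \<sigma>_dd as 0.\<close>

definition tau_coord :: "nat \<Rightarrow> complex mat \<Rightarrow> nat \<Rightarrow> complex"
  where "tau_coord d \<sigma> j =
    of_nat (j + 1) * (\<sigma> $$ (j, j) - (if Suc j < d then \<sigma> $$ (Suc j, Suc j) else 0))"

lemma dim_tau_mix [simp]: "dim_row (tau_mix d c) = d" "dim_col (tau_mix d c) = d"
  unfolding tau_mix_def by simp_all

lemma tau_mix_cong: "(\<And>j. j < d \<Longrightarrow> c j = c' j) \<Longrightarrow> tau_mix d c = tau_mix d c'"
  unfolding tau_mix_def by (intro eq_matI) auto

lemma tau_eq_tau_mix_ket: "k < d \<Longrightarrow> tau d k = tau_mix d (ket k)"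
  by (intro eq_matI) (auto simp: tau_mix_def tau_def)

lemma tau_mix_entry_sum:
  "a < d \<Longrightarrow> b < d \<Longrightarrow>
    tau_mix d c $$ (a, b) = (if a = b then \<Sum>j<d. if a \<le> j then c j / of_nat (j + 1) else 0 else 0)"
  by (auto simp: tau_mix_def tau_def intro: sum.neutral sum.cong)

lemma tau_mix_entry:
  assumes "a < d" "b < d"
  shows "tau_mix d c $$ (a, b) = (if a = b then \<Sum>j\<in>{a..<d}. c j / of_nat (j + 1) else 0)"
  using assms by (simp add: tau_mix_entry_sum sum_if_le_eq_sum_atLeastLessThan)

lemma tau_coord_tau_mix:
  assumes "j < d"
  shows "tau_coord d (tau_mix d c) j = c j"
proof -
  have "tau_mix d c $$ (j, j)
      = c j / of_nat (j + 1) + (if Suc j < d then tau_mix d c $$ (Suc j, Suc j) else 0)"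
    using assms by (auto simp: tau_mix_entry sum.atLeast_Suc_lessThan)
  then show ?thesis by (simp add: tau_coord_def)
qed

lemma tau_mix_tau_coord:
  assumes \<sigma>: "\<sigma> \<in> carrier_mat d d"
    and diagonal: "\<And>a b. a < d \<Longrightarrow> b < d \<Longrightarrow> a \<noteq> b \<Longrightarrow> \<sigma> $$ (a, b) = 0"
  shows "tau_mix d (tau_coord d \<sigma>) = \<sigma>"
proof (rule eq_matI)
  fix a b assume "a < dim_row \<sigma>" "b < dim_col \<sigma>"
  then have a: "a < d" and b: "b < d" using \<sigma> by auto
  define s where "s j = (if j < d then \<sigma> $$ (j, j) else 0)" for j
  have "tau_coord d \<sigma> j / of_nat (j + 1) = s j - s (Suc j)" if "j < d" for j
    using that by (simp add: tau_coord_def s_def)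
  then have "(\<Sum>j\<in>{a..<d}. tau_coord d \<sigma> j / of_nat (j + 1)) = (\<Sum>j\<in>{a..<d}. s j - s (Suc j))"
    by (intro sum.cong) auto
  also have "\<dots> = s a - s d"
    using sum_Suc_diff'[of a d "\<lambda>j. - s j"] a by simp
  also have "\<dots> = \<sigma> $$ (a, a)" using a by (simp add: s_def)
  finally have "tau_mix d (tau_coord d \<sigma>) $$ (a, a) = \<sigma> $$ (a, a)"
    using a by (simp add: tau_mix_entry)
  then show "tau_mix d (tau_coord d \<sigma>) $$ (a, b) = \<sigma> $$ (a, b)"
    using a b diagonal by (cases "a = b") (simp_all add: tau_mix_entry)
qed (use \<sigma> in auto)

lemma mtrace_tau_mix: "mtrace (tau_mix d c) = (\<Sum>j<d. c j)"
proof -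
  have "mtrace (tau_mix d c) = (\<Sum>a<d. \<Sum>j<d. if a \<le> j then c j / of_nat (j + 1) else 0)"
    unfolding mtrace_def by (simp add: tau_mix_entry_sum)
  also have "\<dots> = (\<Sum>j<d. \<Sum>a<d. if a \<le> j then c j / of_nat (j + 1) else 0)"
    by (rule sum.swap)
  also have "\<dots> = (\<Sum>j<d. of_nat (card {a \<in> {..<d}. a \<le> j}) * (c j / of_nat (j + 1)))"
    by (simp add: sum.inter_filter[symmetric])
  also have "\<dots> = (\<Sum>j<d. c j)"
  proof (rule sum.cong[OF refl])
    fix j assume "j \<in> {..<d}"
    then have "{a \<in> {..<d}. a \<le> j} = {..j}" by auto
    then show "of_nat (card {a \<in> {..<d}. a \<le> j}) * (c j / of_nat (j + 1)) = c j" by simp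
  qed
  finally show ?thesis .
qed

lemma passive_state_eq_tau_mix:
  assumes "\<sigma> \<in> passive_states d"
  obtains q where "prob_vec d q" "\<sigma> = tau_mix d (\<lambda>j. of_real (q j))"
proof -
  obtain p where nonneg: "\<forall>i<d. 0 \<le> p i" and sum1: "(\<Sum>i<d. p i) = 1"
    and decreasing: "\<forall>i j. i \<le> j \<longrightarrow> j < d \<longrightarrow> p j \<le> p i"
    and \<sigma>: "\<sigma> = mat d d (\<lambda>(i, k). if i = k then complex_of_real (p i) else 0)"
    using assms unfolding passive_states_def by blast
  define q where "q j = real (j + 1) * (p j - (if Suc j < d then p (Suc j) else 0))" for j
  have "tau_coord d \<sigma> j = of_real (q j)" if "j < d" for j
    using that by (simp add: tau_coord_def q_def \<sigma>)
  then have "tau_mix d (tau_coord d \<sigma>) = tau_mix d (\<lambda>j. of_real (q j))"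
    by (rule tau_mix_cong)
  then have \<sigma>_eq: "\<sigma> = tau_mix d (\<lambda>j. of_real (q j))"
    using tau_mix_tau_coord[of \<sigma> d] by (simp add: \<sigma>)
  have q_nonneg: "\<forall>j<d. 0 \<le> q j"
    using nonneg decreasing by (simp add: q_def)
  have "complex_of_real (\<Sum>j<d. q j) = mtrace \<sigma>"
    using mtrace_tau_mix[of d "\<lambda>j. of_real (q j)"] by (simp add: \<sigma>_eq)
  also have "\<dots> = of_real (\<Sum>i<d. p i)" by (simp add: \<sigma> mtrace_def)
  finally have "(\<Sum>j<d. q j) = 1" using sum1 by (simp only: of_real_eq_iff)
  with q_nonneg show ?thesis using \<sigma>_eq by (intro that) (simp_all add: prob_vec_def)
qed

lemma tau_mix_passive:
  assumes q: "prob_vec d q"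
  shows "tau_mix d (\<lambda>j. of_real (q j)) \<in> passive_states d"
proof -
  define p where "p a = (\<Sum>j\<in>{a..<d}. q j / real (j + 1))" for a
  have \<sigma>: "tau_mix d (\<lambda>j. of_real (q j)) = mat d d (\<lambda>(i, k). if i = k then complex_of_real (p i) else 0)"
    by (rule eq_matI) (auto simp: tau_mix_entry p_def)
  have nonneg: "0 \<le> q j / real (j + 1)" if "j < d" for j
    using q that by (simp add: prob_vec_def)
  then have "\<forall>i<d. 0 \<le> p i" by (auto simp: p_def intro: sum_nonneg)
  moreover have "\<forall>i j. i \<le> j \<longrightarrow> j < d \<longrightarrow> p j \<le> p i"
    unfolding p_def using nonneg by (auto intro!: sum_mono2)
  moreover have "complex_of_real (\<Sum>i<d. p i) = 1"
    using mtrace_tau_mix[of d "\<lambda>j. of_real (q j)"] q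
    by (simp add: \<sigma> mtrace_def prob_vec_def flip: of_real_sum)
  then have "(\<Sum>i<d. p i) = 1" by (simp only: of_real_eq_1_iff)
  ultimately show ?thesis unfolding passive_states_def \<sigma> by blast
qed

lemma tau_passive:
  assumes "k < d"
  shows "tau d k \<in> passive_states d"
proof -
  have "tau d k = tau_mix d (\<lambda>j. of_real (if j = k then 1 else 0))"
    unfolding tau_eq_tau_mix_ket[OF assms] by (rule tau_mix_cong) (simp add: ket_def)
  moreover have "prob_vec d (\<lambda>j. if j = k then 1 else 0)"
    using assms by (simp add: prob_vec_def)
  ultimately show ?thesis by (simp only: tau_mix_passive)
qed

section \<open>Measure-and-prepare channels onto passive states\<close>

lemma tau_measurement_passive:
  assumes orth: "orthonormal d (\<lambda>j i. \<psi> j $ i)" and \<rho>: "\<rho> \<in> density_states d"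
  shows "tau_mix d (\<lambda>j. qform d \<rho> (\<psi> j)) \<in> passive_states d"
proof -
  define q where "q j = Re (qform d \<rho> (\<psi> j))" for j
  have "0 \<le> qform d \<rho> (\<psi> j)" for j
    using \<rho> by (simp add: density_states_def psd_iff_psd_form psd_form_def qform_eq_quad)
  then have qform_eq: "qform d \<rho> (\<psi> j) = of_real (q j)" and q_nonneg: "0 \<le> q j" for j
    by (simp_all add: q_def less_eq_complex_def complex_eq_iff)
  have "of_real (\<Sum>j<d. q j) = (\<Sum>j<d. qform d \<rho> (\<psi> j))" by (simp add: qform_eq)
  also have "\<dots> = mtrace \<rho>"
    using sum_quad_orthonormal[OF orth, of "\<lambda>i k. \<rho> $$ (i, k)"] density_states_carrier[OF \<rho>]
    by (simp add: qform_eq_quad mtrace_def)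
  also have "\<dots> = 1" using \<rho> by (simp add: density_states_def)
  finally have "(\<Sum>j<d. q j) = 1" by (simp only: of_real_eq_1_iff)
  then have "prob_vec d q" using q_nonneg by (simp add: prob_vec_def)
  then show ?thesis by (simp add: qform_eq tau_mix_passive)
qed

lemma passive_eq_tau_measurement:
  assumes orth: "orthonormal d (\<lambda>j i. \<psi> j $ i)" and \<sigma>: "\<sigma> \<in> passive_states d"
  obtains \<rho> where "\<rho> \<in> density_states d" "\<sigma> = tau_mix d (\<lambda>j. qform d \<rho> (\<psi> j))"
proof -
  obtain q where q: "prob_vec d q" and \<sigma>_eq: "\<sigma> = tau_mix d (\<lambda>j. of_real (q j))"
    using \<sigma> by (rule passive_state_eq_tau_mix)
  define \<rho> where "\<rho> = mixture d q (\<lambda>j i. \<psi> j $ i)"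
  have "qform d \<rho> (\<psi> j) = of_real (q j)" if "j < d" for j
    unfolding \<rho>_def qform_eq_quad using quad_mixture_orthonormal[OF orth that] .
  then have "\<sigma> = tau_mix d (\<lambda>j. qform d \<rho> (\<psi> j))"
    unfolding \<sigma>_eq by (intro tau_mix_cong) simp
  moreover have "\<rho> \<in> density_states d"
    unfolding \<rho>_def using q orth by (rule mixture_density_state)
  ultimately show ?thesis using that by blast
qed

lemma passive_image_of_tau_measurement:
  assumes orth: "orthonormal d (\<lambda>j i. \<psi> j $ i)"
    and P: "\<forall>\<rho> \<in> carrier_mat d d. P \<rho> = tau_mix d (\<lambda>j. qform d \<rho> (\<psi> j))"
  shows "P ` density_states d = passive_states d"
proof -
  have agree: "P \<rho> = tau_mix d (\<lambda>j. qform d \<rho> (\<psi> j))" if "\<rho> \<in> density_states d" for \<rho>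
    using P density_states_carrier[OF that] by blast
  show ?thesis
  proof
    show "P ` density_states d \<subseteq> passive_states d"
      using tau_measurement_passive[OF orth] agree by auto
    show "passive_states d \<subseteq> P ` density_states d"
    proof
      fix \<sigma> assume "\<sigma> \<in> passive_states d"
      then obtain \<rho> where "\<rho> \<in> density_states d" "\<sigma> = tau_mix d (\<lambda>j. qform d \<rho> (\<psi> j))"
        by (rule passive_eq_tau_measurement[OF orth])
      then show "\<sigma> \<in> P ` density_states d" using agree by auto
    qed
  qed
qed

section \<open>Channels whose image is the passive states\<close>

text \<open>A positive \<rho> dominates |c\<rangle>\<langle>c| / \<rho>_aa for its a-th column c: the quadratic form of the
  difference is \<langle>x|\<rho>|x\<rangle> - |\<langle>x|c\<rangle>|^2 / \<rho>_aa, nonnegative by Cauchy-Schwarz.\<close>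

lemma psd_minus_column_proj:
  assumes \<rho>: "psd n \<rho>" and a: "a < n" and \<alpha>: "\<rho> $$ (a, a) = of_real \<alpha>" "0 < \<alpha>"
  shows "psd n (\<rho> - of_real (1 / \<alpha>) \<cdot>\<^sub>m proj_mat n (\<lambda>i. \<rho> $$ (i, a)))"
proof -
  let ?K = "\<lambda>i j. \<rho> $$ (i, j)"
  let ?R = "\<rho> - of_real (1 / \<alpha>) \<cdot>\<^sub>m proj_mat n (\<lambda>i. \<rho> $$ (i, a))"
  have carrier: "\<rho> \<in> carrier_mat n n" and K: "psd_form n ?K"
    using \<rho> by (simp_all add: psd_iff_psd_form)
  have "0 \<le> quad n (\<lambda>i j. ?R $$ (i, j)) x" for x
  proof -
    define z where "z = sesq n ?K x (ket a)"
    have "quad n (\<lambda>i j. ?R $$ (i, j)) x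
        = quad n (\<lambda>i j. ?K i j - of_real (1 / \<alpha>) * proj_mat n (\<lambda>i. \<rho> $$ (i, a)) $$ (i, j)) x"
      using carrier unfolding sesq_def by (intro sum.cong refl) auto
    also have "\<dots> = quad n ?K x - of_real (1 / \<alpha>) * (z * cnj z)"
      by (simp only: sesq_diff_scaled quad_proj_mat z_def sesq_ket_right[OF a])
    finally have R: "quad n (\<lambda>i j. ?R $$ (i, j)) x = quad n ?K x - of_real (1 / \<alpha>) * (z * cnj z)" .
    have "(cmod z)\<^sup>2 \<le> Re (quad n ?K x) * \<alpha>"
      using psd_form_cauchy_schwarz[OF K a, of x] \<alpha>(1) by (simp add: z_def)
    then have "0 \<le> Re (quad n ?K x) - (cmod z)\<^sup>2 / \<alpha>" using \<alpha>(2) by (simp add: field_simps)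
    moreover have "Im (quad n ?K x) = 0" using K by (simp add: psd_form_def less_eq_complex_def)
    ultimately show ?thesis
      unfolding R by (simp add: less_eq_complex_def complex_mult_cnj cmod_power2)
  qed
  moreover have "?R \<in> carrier_mat n n" using carrier by (intro minus_carrier_mat) simp_all
  ultimately show ?thesis unfolding psd_iff_psd_form psd_form_def by blast
qed

lemma nonneg_functional_vanishes_on_column:
  assumes f: "linear_functional n f" and nonneg: "\<And>X. psd n X \<Longrightarrow> 0 \<le> f X"
    and \<rho>: "psd n \<rho>" "f \<rho> = 0" and a: "a < n" "\<rho> $$ (a, a) \<noteq> 0"
  shows "f (proj_mat n (\<lambda>i. \<rho> $$ (i, a))) = 0"
proof -
  define \<alpha> where "\<alpha> = Re (\<rho> $$ (a, a))"
  let ?P = "proj_mat n (\<lambda>i. \<rho> $$ (i, a))"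
  let ?R = "\<rho> - of_real (1 / \<alpha>) \<cdot>\<^sub>m ?P"
  have "0 \<le> \<rho> $$ (a, a)" by (rule psd_diag_nonneg[OF \<rho>(1) a(1)])
  then have \<alpha>: "\<rho> $$ (a, a) = of_real \<alpha>" "0 < \<alpha>"
    using a(2) by (auto simp: \<alpha>_def less_eq_complex_def complex_eq_iff)
  have carrier: "\<rho> \<in> carrier_mat n n" using \<rho> by (simp add: psd_def)
  have split: "of_real (1 / \<alpha>) \<cdot>\<^sub>m ?P + ?R = \<rho>" using carrier by (intro eq_matI) auto
  have smult: "f (of_real (1 / \<alpha>) \<cdot>\<^sub>m ?P) = of_real (1 / \<alpha>) * f ?P"
    by (rule linear_functional_smult[OF f]) simp
  have "f (of_real (1 / \<alpha>) \<cdot>\<^sub>m ?P + ?R) = of_real (1 / \<alpha>) * f ?P + f ?R"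
    unfolding smult[symmetric] using carrier by (intro linear_functional_add[OF f]) auto
  then have sum0: "of_real (1 / \<alpha>) * f ?P + f ?R = 0" using split \<rho>(2) by simp
  have "0 \<le> of_real (1 / \<alpha>) * f ?P"
    using \<alpha>(2) nonneg[OF psd_proj_mat] by (intro mult_nonneg_nonneg) (simp_all add: less_eq_complex_def)
  moreover have "0 \<le> f ?R" by (rule nonneg[OF psd_minus_column_proj[OF \<rho>(1) a(1) \<alpha>]])
  ultimately have "of_real (1 / \<alpha>) * f ?P = 0" using sum0 by (simp add: add_nonneg_eq_0_iff)
  then show ?thesis using \<alpha>(2) by simp
qed

lemma pure_state_with_values:
  assumes Q: "\<And>l. l < n \<Longrightarrow> linear_functional n (Q l)"
    and nonneg: "\<And>l X. l < n \<Longrightarrow> psd n X \<Longrightarrow> 0 \<le> Q l X"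
    and sum_mtrace: "\<And>X. X \<in> carrier_mat n n \<Longrightarrow> (\<Sum>l<n. Q l X) = mtrace X"
    and \<rho>: "\<rho> \<in> density_states n" and vals: "\<And>l. l < n \<Longrightarrow> Q l \<rho> = ket k l" and k: "k < n"
  shows "\<exists>v. \<forall>l<n. Q l (proj_mat n v) = ket k l"
proof -
  have psd: "psd n \<rho>" and tr: "mtrace \<rho> = 1" using \<rho> by (simp_all add: density_states_def)
  have "\<exists>a<n. \<rho> $$ (a, a) \<noteq> 0"
  proof (rule ccontr)
    assume "\<not> ?thesis"
    then have "mtrace \<rho> = 0" using density_states_carrier[OF \<rho>] by (simp add: mtrace_def)
    with tr show False by simp
  qed
  then obtain a where a: "a < n" "\<rho> $$ (a, a) \<noteq> 0" by blast
  let ?c = "\<lambda>i. \<rho> $$ (i, a)"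
  let ?P = "proj_mat n ?c"
  have QP: "Q l ?P = ket k l * Q k ?P" if "l < n" for l
    using nonneg_functional_vanishes_on_column[OF Q[OF that] nonneg[OF that] psd _ a] vals[OF that]
    by (cases "l = k") (simp_all add: ket_def)
  have "Q k ?P = (\<Sum>l<n. ket k l * Q k ?P)" using k by simp
  also have "\<dots> = (\<Sum>l<n. Q l ?P)" using QP by (intro sum.cong) simp_all
  also have "\<dots> = mtrace ?P" by (rule sum_mtrace) simp
  also have "\<dots> = (\<Sum>i<n. ?c i * cnj (?c i))" by (rule mtrace_proj_mat)
  finally have Qk: "Q k ?P = (\<Sum>i<n. ?c i * cnj (?c i))" .
  define N where "N = Re (Q k ?P)"
  have terms_nonneg: "\<forall>i\<in>{..<n}. 0 \<le> ?c i * cnj (?c i)" by (simp add: mult_cnj_nonneg)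
  then have "Q k ?P \<noteq> 0"
    using a unfolding Qk by (subst sum_nonneg_eq_0_iff) auto
  moreover have "0 \<le> Q k ?P" unfolding Qk by (simp add: sum_nonneg mult_cnj_nonneg)
  ultimately have QkN: "Q k ?P = of_real N" and "0 < N"
    by (auto simp: N_def less_eq_complex_def complex_eq_iff)
  define v where "v i = of_real (1 / sqrt N) * ?c i" for i
  have "proj_mat n v = of_real (1 / N) \<cdot>\<^sub>m ?P"
    unfolding v_def proj_mat_scale using \<open>0 < N\<close> by (simp flip: of_real_mult)
  then have "Q l (proj_mat n v) = of_real (1 / N) * (ket k l * Q k ?P)" if "l < n" for l
    using linear_functional_smult[OF Q[OF that]] QP[OF that] by simp
  then have "\<forall>l<n. Q l (proj_mat n v) = ket k l" using QkN \<open>0 < N\<close> by (simp add: ket_def)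
  then show ?thesis by blast
qed

context
  fixes n :: nat and G :: "nat \<Rightarrow> nat \<Rightarrow> nat \<Rightarrow> complex" and v :: "nat \<Rightarrow> nat \<Rightarrow> complex"
  assumes psd_G: "\<And>l. l < n \<Longrightarrow> psd_form n (G l)"
    and sum_G: "\<And>i k. i < n \<Longrightarrow> k < n \<Longrightarrow> (\<Sum>l<n. G l i k) = (if i = k then 1 else 0)"
    and quad_G: "\<And>l m. l < n \<Longrightarrow> m < n \<Longrightarrow> quad n (G l) (v m) = ket l m"
begin

lemma povm_apply:
  assumes i: "i < n" and l: "l < n" and m: "m < n"
  shows "(\<Sum>j<n. G l i j * v m j) = ket l m * v m i"
proof -
  have vanish: "(\<Sum>j<n. G l' i j * v m j) = 0" if "l' < n" "l' \<noteq> m" for l'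
    using psd_form_kernel[OF psd_G[OF that(1)] _ i] quad_G[OF that(1) m] that(2) by (simp add: ket_def)
  show ?thesis
  proof (cases "l = m")
    case False
    then show ?thesis using vanish[OF l] by (simp add: ket_def)
  next
    case True
    have "(\<Sum>l'<n. \<Sum>j<n. G l' i j * v m j) = (\<Sum>j<n. (\<Sum>l'<n. G l' i j) * v m j)"
      by (subst sum.swap) (simp add: sum_distrib_right)
    also have "\<dots> = (\<Sum>j<n. ket i j * v m j)"
      using i by (intro sum.cong refl) (simp add: sum_G ket_def)
    also have "\<dots> = v m i" using i by simp
    finally have "(\<Sum>l'<n. \<Sum>j<n. G l' i j * v m j) = v m i" .
    moreover have "(\<Sum>l'<n. \<Sum>j<n. G l' i j * v m j) = (\<Sum>l'<n. ket m l' * (\<Sum>j<n. G m i j * v m j))"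
      using vanish by (intro sum.cong refl) (simp add: ket_def)
    ultimately show ?thesis using True m by simp
  qed
qed

lemma povm_orthonormal: "orthonormal n v"
  unfolding orthonormal_def
proof (intro allI impI)
  fix m l assume m: "m < n" and l: "l < n"
  have "(\<Sum>i<n. cnj (v m i) * v l i) = sesq n (G l) (v m) (v l)"
    unfolding sesq_eq_sum_apply using povm_apply[OF _ l l] l by simp
  also have "\<dots> = cnj (sesq n (G l) (v l) (v m))" by (rule psd_form_sesq_swap[OF psd_G[OF l]])
  also have "\<dots> = cnj (\<Sum>i<n. cnj (v l i) * (ket l m * v m i))"
    unfolding sesq_eq_sum_apply using povm_apply[OF _ l m] by simp
  finally have "(\<Sum>i<n. cnj (v m i) * v l i) = cnj (\<Sum>i<n. cnj (v l i) * (ket l m * v m i))" .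
  moreover have "(\<Sum>i<n. cnj (v l i) * v l i) = 1"
    using povm_apply[OF _ l l] quad_G[OF l l] l unfolding sesq_eq_sum_apply by simp
  ultimately show "(\<Sum>i<n. cnj (v m i) * v l i) = (if m = l then 1 else 0)"
    by (cases "m = l") (simp_all add: ket_def)
qed

lemma povm_rank_one:
  assumes l: "l < n" and i: "i < n" and k: "k < n"
  shows "G l i k = v l i * cnj (v l k)"
proof -
  have "G l i k = (\<Sum>j<n. G l i j * ket k j)" using k by simp
  also have "\<dots> = (\<Sum>j<n. G l i j * (\<Sum>m<n. v m j * cnj (v m k)))"
    using orthonormal_completeness[OF povm_orthonormal _ k] by (intro sum.cong refl) (simp add: ket_def)
  also have "\<dots> = (\<Sum>m<n. (\<Sum>j<n. G l i j * v m j) * cnj (v m k))"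
    by (simp add: sum_distrib_left sum_distrib_right mult.assoc) (rule sum.swap)
  also have "\<dots> = (\<Sum>m<n. ket l m * (v m i * cnj (v m k)))"
    using povm_apply[OF i l] by (intro sum.cong refl) simp
  also have "\<dots> = v l i * cnj (v l k)" using l by simp
  finally show ?thesis .
qed

end

locale passivizing_map =
  fixes d :: nat and P :: "complex mat \<Rightarrow> complex mat"
  assumes maps_carrier: "\<And>A. A \<in> carrier_mat d d \<Longrightarrow> P A \<in> carrier_mat d d"
    and linear: "\<And>A B a b. A \<in> carrier_mat d d \<Longrightarrow> B \<in> carrier_mat d d \<Longrightarrow>
      P (a \<cdot>\<^sub>m A + b \<cdot>\<^sub>m B) = a \<cdot>\<^sub>m P A + b \<cdot>\<^sub>m P B"
    and image_states: "P ` density_states d = passive_states d"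
begin

definition weight :: "nat \<Rightarrow> complex mat \<Rightarrow> complex"
  where "weight j X = tau_coord d (P X) j"

lemma linear_functional_entry:
  assumes "a < d" "b < d"
  shows "linear_functional d (\<lambda>X. P X $$ (a, b))"
  unfolding linear_functional_def
proof (intro ballI allI)
  fix A B :: "complex mat" and x y :: complex
  assume A: "A \<in> carrier_mat d d" and B: "B \<in> carrier_mat d d"
  then have "P A \<in> carrier_mat d d" "P B \<in> carrier_mat d d" by (simp_all add: maps_carrier)
  then show "P (x \<cdot>\<^sub>m A + y \<cdot>\<^sub>m B) $$ (a, b) = x * P A $$ (a, b) + y * P B $$ (a, b)"
    using assms by (simp add: linear[OF A B])
qed

lemma linear_functional_weight:
  assumes "j < d"
  shows "linear_functional d (weight j)"
proof -
  have "linear_functional d (\<lambda>X. if Suc j < d then P X $$ (Suc j, Suc j) else 0)"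
    using linear_functional_entry[of "Suc j" "Suc j"]
    by (cases "Suc j < d") (simp_all add: linear_functional_def)
  then show ?thesis unfolding weight_def[abs_def] tau_coord_def
    by (intro linear_functional_scale linear_functional_diff linear_functional_entry assms)
qed

lemma weights_of_state:
  assumes "\<rho> \<in> density_states d"
  obtains q where "prob_vec d q" "\<And>j. j < d \<Longrightarrow> weight j \<rho> = of_real (q j)"
    "P \<rho> = tau_mix d (\<lambda>j. weight j \<rho>)"
proof -
  have "P \<rho> \<in> passive_states d" using image_states assms by blast
  then obtain q where q: "prob_vec d q" and P\<rho>: "P \<rho> = tau_mix d (\<lambda>j. of_real (q j))"
    by (rule passive_state_eq_tau_mix)
  have w: "weight j \<rho> = of_real (q j)" if "j < d" for j
    using that by (simp add: weight_def P\<rho> tau_coord_tau_mix)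
  then have "P \<rho> = tau_mix d (\<lambda>j. weight j \<rho>)" unfolding P\<rho> by (intro tau_mix_cong) simp
  with q w show ?thesis by (rule that)
qed

lemma weight_nonneg:
  assumes j: "j < d" and X: "psd d X"
  shows "0 \<le> weight j X"
proof (rule linear_functional_nonneg_on_psd[OF linear_functional_weight[OF j] _ X])
  fix \<rho> assume "\<rho> \<in> density_states d"
  then obtain q where "prob_vec d q" "weight j \<rho> = of_real (q j)" using j by (metis weights_of_state)
  then show "0 \<le> weight j \<rho>" using j by (simp add: prob_vec_def less_eq_complex_def)
qed

lemma sum_weights:
  assumes X: "X \<in> carrier_mat d d"
  shows "(\<Sum>j<d. weight j X) = mtrace X"
proof (rule linear_functional_eq_on_states[OF _ linear_functional_mtrace _ X])
  show "linear_functional d (\<lambda>X. \<Sum>j<d. weight j X)"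
    by (intro linear_functional_sum linear_functional_weight) simp
next
  fix \<rho> assume \<rho>: "\<rho> \<in> density_states d"
  then obtain q where q: "prob_vec d q" and w: "\<And>j. j < d \<Longrightarrow> weight j \<rho> = of_real (q j)"
    by (metis weights_of_state)
  have "(\<Sum>j<d. weight j \<rho>) = of_real (\<Sum>j<d. q j)" using w by simp
  also have "\<dots> = mtrace \<rho>" using q \<rho> by (simp add: prob_vec_def density_states_def)
  finally show "(\<Sum>j<d. weight j \<rho>) = mtrace \<rho>" .
qed

lemma tau_mix_weights:
  assumes X: "X \<in> carrier_mat d d"
  shows "P X = tau_mix d (\<lambda>j. weight j X)"
proof (rule eq_matI)
  fix a b assume "a < dim_row (tau_mix d (\<lambda>j. weight j X))" "b < dim_col (tau_mix d (\<lambda>j. weight j X))"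
  then have a: "a < d" and b: "b < d" by simp_all
  have "P X $$ (a, b) = (\<Sum>j<d. weight j X * tau d j $$ (a, b))"
  proof (rule linear_functional_eq_on_states[OF linear_functional_entry[OF a b] _ _ X])
    show "linear_functional d (\<lambda>X. \<Sum>j<d. weight j X * tau d j $$ (a, b))"
      by (intro linear_functional_sum linear_functional_scale_right linear_functional_weight) simp
  next
    fix \<rho> assume "\<rho> \<in> density_states d"
    then have "P \<rho> = tau_mix d (\<lambda>j. weight j \<rho>)" by (metis weights_of_state)
    then show "P \<rho> $$ (a, b) = (\<Sum>j<d. weight j \<rho> * tau d j $$ (a, b))"
      using a b by (simp add: tau_mix_def)
  qed
  then show "P X $$ (a, b) = tau_mix d (\<lambda>j. weight j X) $$ (a, b)"
    using a b by (simp add: tau_mix_def)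
qed (use X maps_carrier in auto)

lemma pure_state_weights:
  assumes k: "k < d"
  shows "\<exists>v. \<forall>l<d. weight l (proj_mat d v) = ket k l"
proof -
  obtain \<rho> where \<rho>: "\<rho> \<in> density_states d" and "P \<rho> = tau d k"
    using tau_passive[OF k] image_states by (metis imageE)
  then have "weight l \<rho> = ket k l" if "l < d" for l
    using that k by (simp add: weight_def tau_eq_tau_mix_ket tau_coord_tau_mix)
  then show ?thesis
    using \<rho> k by (intro pure_state_with_values[where Q = weight])
      (simp_all add: linear_functional_weight weight_nonneg sum_weights)
qed

definition effect :: "nat \<Rightarrow> nat \<Rightarrow> nat \<Rightarrow> complex"
  where "effect l i k = weight l (elem_mat d k i)"

lemma weight_proj_mat: "l < d \<Longrightarrow> weight l (proj_mat d x) = quad d (effect l) x"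
  unfolding effect_def by (rule linear_functional_proj_mat[OF linear_functional_weight])

lemma psd_form_effect: "l < d \<Longrightarrow> psd_form d (effect l)"
  unfolding psd_form_def using weight_nonneg[OF _ psd_proj_mat] weight_proj_mat by metis

lemma sum_effects: "i < d \<Longrightarrow> k < d \<Longrightarrow> (\<Sum>l<d. effect l i k) = (if i = k then 1 else 0)"
  unfolding effect_def sum_weights[OF elem_mat_carrier]
  by (auto simp: mtrace_def elem_mat_def intro: sum.neutral)

lemma exists_orthonormal_measurement:
  "\<exists>\<psi>. (\<forall>j<d. \<psi> j \<in> carrier_vec d) \<and> orthonormal d (\<lambda>j i. \<psi> j $ i) \<and>
     (\<forall>\<rho> \<in> carrier_mat d d. P \<rho> = tau_mix d (\<lambda>j. qform d \<rho> (\<psi> j)))"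
proof -
  have "\<forall>k. \<exists>v. k < d \<longrightarrow> (\<forall>l<d. weight l (proj_mat d v) = ket k l)"
    using pure_state_weights by blast
  then obtain v where v: "\<And>k l. k < d \<Longrightarrow> l < d \<Longrightarrow> weight l (proj_mat d (v k)) = ket k l"
    by metis
  have quad_v: "quad d (effect l) (v m) = ket l m" if "l < d" "m < d" for l m
    using v[OF that(2,1)] weight_proj_mat[OF that(1)] by (simp add: ket_def)
  have orth: "orthonormal d v"
    by (rule povm_orthonormal[OF psd_form_effect sum_effects quad_v])
  have effect_eq: "effect l i k = v l i * cnj (v l k)" if "l < d" "i < d" "k < d" for l i k
    by (rule povm_rank_one[OF psd_form_effect sum_effects quad_v that])
  define \<psi> where "\<psi> j = vec d (v j)" for j
  have weight_eq: "weight l X = qform d X (\<psi> l)" if l: "l < d" and X: "X \<in> carrier_mat d d" for l X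
  proof -
    have "weight l X = (\<Sum>a<d. \<Sum>b<d. X $$ (a, b) * effect l b a)"
      using linear_functional_expand[OF linear_functional_weight[OF l] X] by (simp add: effect_def)
    also have "\<dots> = qform d X (\<psi> l)"
      unfolding qform_def \<psi>_def using l by (intro sum.cong refl) (simp add: effect_eq ac_simps)
    finally show ?thesis .
  qed
  have "P \<rho> = tau_mix d (\<lambda>j. qform d \<rho> (\<psi> j))" if "\<rho> \<in> carrier_mat d d" for \<rho>
    unfolding tau_mix_weights[OF that] using weight_eq[OF _ that] by (rule tau_mix_cong)
  moreover have "orthonormal d (\<lambda>j i. \<psi> j $ i)"
    using orth by (simp add: orthonormal_def \<psi>_def)
  moreover have "\<forall>j<d. \<psi> j \<in> carrier_vec d" by (simp add: \<psi>_def)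
  ultimately show ?thesis by blast
qed

end

theorem mainTheorem6:
  fixes d :: nat and P :: "complex mat \<Rightarrow> complex mat"
  assumes "0 < d" and "quantum_channel d P"
  shows "P ` density_states d = passive_states d \<longleftrightarrow>
    (\<exists>\<psi> :: nat \<Rightarrow> complex vec.
       (\<forall>j<d. \<psi> j \<in> carrier_vec d) \<and>
       (\<forall>j<d. \<forall>k<d. (\<Sum>i<d. cnj (\<psi> j $ i) * \<psi> k $ i) = (if j = k then 1 else 0)) \<and>
       (\<forall>\<rho> \<in> carrier_mat d d.
          P \<rho> = mat d d (\<lambda>(a, b). \<Sum>j<d. qform d \<rho> (\<psi> j) * tau d j $$ (a, b))))"
proof -
  have tau_form: "mat d d (\<lambda>(a, b). \<Sum>j<d. qform d \<rho> (\<psi> j) * tau d j $$ (a, b))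
      = tau_mix d (\<lambda>j. qform d \<rho> (\<psi> j))" for \<rho> \<psi>
    by (simp add: tau_mix_def)
  have orth_form: "(\<forall>j<d. \<forall>k<d. (\<Sum>i<d. cnj (\<psi> j $ i) * \<psi> k $ i) = (if j = k then 1 else 0))
      \<longleftrightarrow> orthonormal d (\<lambda>j i. \<psi> j $ i)" for \<psi> :: "nat \<Rightarrow> complex vec"
    by (simp add: orthonormal_def)
  have "passivizing_map d P" if "P ` density_states d = passive_states d"
    using assms(2) that by (simp add: passivizing_map_def quantum_channel_def)
  then show ?thesis
    unfolding tau_form orth_form
    using passivizing_map.exists_orthonormal_measurement passive_image_of_tau_measurement by blast
qed

end
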